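(* Let $\Gamma$ be a 3-colex and $c\in\{r,b,g,y\}$. The 3-cells of the minor complex $\Gamma^{*\setminus c}$ can be indexed by the $c$-vertices of $\Gamma^*$, the 3-cell $\nu_v$ indexed by the $c$-vertex $v$ being formed by merging all tetrahedra of $\Gamma^*$ incident on $v$; and the boundary of $\nu_v$ is the mod-2 sum of the $c$-faces of the tetrahedra incident on $v$: $\partial(\nu_v)=\sum_{\nu:\,v\in\nu}f^c_{\ni\nu}$.
   Context: Colors are $\{r,b,g,y\}$. A 3-colex $\Gamma$ is a 3-dimensional cell complex without boundary in which every vertex is 4-valent and lies in exactly four 3-cells, and whose 3-cells are properly 4-colored: every face lies in exactly two 3-cells, which have different colors. The dual complex $\Gamma^*$ has an $i$-cell for every $(3-i)$-cell of $\Gamma$, with incidences reversed; every 3-cell of $\Gamma^*$ is a tetrahedron. A vertex of $\Gamma^*$ is given the color of the corresponding 3-cell of $\Gamma$, so the four vertices of each tetrahedron have distinct colors. A face of $\Gamma^*$ is a $c$-face if none of its vertices has color $c$; each tetrahedron $\nu$ has a unique $c$-face, denoted $f^c_{\ni\nu}$. The minor complex $\Gamma^{*\setminus c}$ is obtained from $\Gamma^*$ by deleting all vertices of color $c$ together with all edges and faces incident to them; its 3-cells are the regions formed by merging tetrahedra of $\Gamma^*$ that are no longer separated by a remaining face. *)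

theory Defs
  imports Main
begin

datatype color = Red | Blue | Green | Yellow

text \<open>V: vertices of the dual (= 3-cells of the colex), col: their colours;
  T: tetrahedra of the dual (= vertices of the colex), tv: vertex set of a tetrahedron,
  tf: the faces of a tetrahedron; F: faces of the dual (= edges of the colex),
  fv: vertex set of a face.\<close>

definition dual_colex3 ::
  "'v set \<Rightarrow> ('v \<Rightarrow> color) \<Rightarrow> 't set \<Rightarrow> ('t \<Rightarrow> 'v set) \<Rightarrow> ('t \<Rightarrow> 'f set)
   \<Rightarrow> 'f set \<Rightarrow> ('f \<Rightarrow> 'v set) \<Rightarrow> bool" where
  "dual_colex3 V col T tv tf F fv \<longleftrightarrow>
     finite V \<and> finite T \<and> finite F \<and>
     \<comment> \<open>every 3-cell of the dual is a tetrahedron whose four vertices have distinct colours\<close>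
     (\<forall>\<nu>\<in>T. tv \<nu> \<subseteq> V \<and> card (tv \<nu>) = 4 \<and> inj_on col (tv \<nu>)) \<and>
     \<comment> \<open>the faces of a tetrahedron are its four triangles, one for each 3-subset of its vertices\<close>
     (\<forall>\<nu>\<in>T. tf \<nu> \<subseteq> F \<and> bij_betw fv (tf \<nu>) {S. S \<subseteq> tv \<nu> \<and> card S = 3}) \<and>
     \<comment> \<open>every face lies in exactly two 3-cells (each edge of the colex has two end vertices)\<close>
     (\<forall>f\<in>F. card {\<nu>\<in>T. f \<in> tf \<nu>} = 2) \<and>
     \<comment> \<open>every dual vertex (3-cell of the colex) is incident to some tetrahedron\<close>
     (\<forall>v\<in>V. \<exists>\<nu>\<in>T. v \<in> tv \<nu>) \<and>
     \<comment> \<open>3-cells of the colex are cells: the tetrahedra around a dual vertex v are connected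
         through faces containing v\<close>
     (\<forall>v\<in>V. \<forall>\<nu>\<in>T. \<forall>\<mu>\<in>T. v \<in> tv \<nu> \<longrightarrow> v \<in> tv \<mu> \<longrightarrow>
        (\<nu>, \<mu>) \<in> {(\<alpha>, \<beta>). \<alpha> \<in> T \<and> \<beta> \<in> T \<and> (\<exists>f \<in> tf \<alpha> \<inter> tf \<beta>. v \<in> fv f)}\<^sup>*)"

definition is_cface :: "('v \<Rightarrow> color) \<Rightarrow> ('f \<Rightarrow> 'v set) \<Rightarrow> color \<Rightarrow> 'f \<Rightarrow> bool" where
  "is_cface col fv c f \<longleftrightarrow> (\<forall>w\<in>fv f. col w \<noteq> c)"

definition cface_of :: "('v \<Rightarrow> color) \<Rightarrow> ('t \<Rightarrow> 'f set) \<Rightarrow> ('f \<Rightarrow> 'v set) \<Rightarrow> color \<Rightarrow> 't \<Rightarrow> 'f" where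
  "cface_of col tf fv c \<nu> = (THE f. f \<in> tf \<nu> \<and> is_cface col fv c f)"

text \<open>two tetrahedra are merged in the minor complex when they share a face that is
  deleted (i.e. a face that is not a c-face)\<close>
definition merge_rel :: "('v \<Rightarrow> color) \<Rightarrow> 't set \<Rightarrow> ('t \<Rightarrow> 'f set) \<Rightarrow> ('f \<Rightarrow> 'v set) \<Rightarrow> color
   \<Rightarrow> ('t \<times> 't) set" where
  "merge_rel col T tf fv c =
     {(\<alpha>, \<beta>). \<alpha> \<in> T \<and> \<beta> \<in> T \<and> (\<exists>f \<in> tf \<alpha> \<inter> tf \<beta>. \<not> is_cface col fv c f)}"

definition minor_cells :: "('v \<Rightarrow> color) \<Rightarrow> 't set \<Rightarrow> ('t \<Rightarrow> 'f set) \<Rightarrow> ('f \<Rightarrow> 'v set) \<Rightarrow> color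
   \<Rightarrow> 't set set" where
  "minor_cells col T tf fv c =
     {{\<mu> \<in> T. (\<nu>, \<mu>) \<in> (merge_rel col T tf fv c)\<^sup>*} | \<nu>. \<nu> \<in> T}"

text \<open>mod-2 sum of a finite family of 2-chains (2-chains over Z/2 = sets of faces)\<close>
definition sum2 :: "('a \<Rightarrow> 'f set) \<Rightarrow> 'a set \<Rightarrow> 'f set" where
  "sum2 X A = {f. odd (card {a \<in> A. f \<in> X a})}"

definition bd3 :: "('t \<Rightarrow> 'f set) \<Rightarrow> 't set \<Rightarrow> 'f set" where
  "bd3 tf R = sum2 tf R"

definition tets_at :: "'t set \<Rightarrow> ('t \<Rightarrow> 'v set) \<Rightarrow> 'v \<Rightarrow> 't set" where
  "tets_at T tv v = {\<nu> \<in> T. v \<in> tv \<nu>}"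

end

theory Submission
  imports Defs
begin

text \<open>Every tetrahedron has exactly one vertex of colour c, and its c-face is the face opposite
  that vertex. A face is deleted in the minor exactly when it contains a c-vertex, so merging
  across deleted faces never leaves the star of a c-vertex v; conversely the star of v is
  connected through faces containing v, all of which are deleted. Hence the merged regions are
  exactly the stars of the c-vertices. In the boundary of the star of v, a face through v either
  lies in no tetrahedron of the star or in both tetrahedra containing it, so it cancels mod 2;
  a face avoiding v lies in a tetrahedron of the star exactly when it is that tetrahedron's
  c-face.\<close>

lemma rainbow_set_has_colour:
  fixes col :: "'v \<Rightarrow> color"
  assumes "card S = 4" "inj_on col S"
  shows "\<exists>v\<in>S. col v = c"
proof -
  have univ: "(UNIV :: color set) = {Red, Blue, Green, Yellow}"
    using color.exhaust by auto
  have "card (col ` S) = card (UNIV :: color set)"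
    using assms by (simp add: card_image univ)
  then have "col ` S = UNIV"
    by (metis card_subset_eq finite_insert finite.emptyI subset_UNIV univ)
  then show ?thesis by (metis UNIV_I imageE)
qed

lemma opposite_face_unique:
  assumes faces: "bij_betw fv Fs {S. S \<subseteq> X \<and> card S = 3}"
    and "card X = 4" "v \<in> X"
  shows "\<exists>!f\<in>Fs. v \<notin> fv f"
proof -
  have fin: "finite X" using \<open>card X = 4\<close> by (metis card.infinite zero_neq_numeral)
  have card_opp: "card (X - {v}) = 3" using assms(2,3) fin by simp
  then have "X - {v} \<in> fv ` Fs"
    using faces unfolding bij_betw_def by auto
  then obtain f where f: "f \<in> Fs" "fv f = X - {v}" by blast
  have "g = f" if "g \<in> Fs" "v \<notin> fv g" for g
  proof -
    have "fv g \<subseteq> X - {v}" "card (fv g) = 3"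
      using that faces unfolding bij_betw_def by auto
    then have "fv g = fv f"
      using f card_opp fin by (simp add: card_subset_eq)
    then show ?thesis
      using that f faces unfolding bij_betw_def by (metis inj_onD)
  qed
  then show ?thesis using f by blast
qed

locale colex3_dual =
  fixes V :: "'v set" and col :: "'v \<Rightarrow> color" and T :: "'t set"
    and tv :: "'t \<Rightarrow> 'v set" and tf :: "'t \<Rightarrow> 'f set" and F :: "'f set"
    and fv :: "'f \<Rightarrow> 'v set"
  assumes dual: "dual_colex3 V col T tv tf F fv"
begin

lemma tet_vertices: "\<nu> \<in> T \<Longrightarrow> tv \<nu> \<subseteq> V \<and> card (tv \<nu>) = 4 \<and> inj_on col (tv \<nu>)"
  using dual unfolding dual_colex3_def by blast

lemma tet_faces: "\<nu> \<in> T \<Longrightarrow> tf \<nu> \<subseteq> F \<and> bij_betw fv (tf \<nu>) {S. S \<subseteq> tv \<nu> \<and> card S = 3}"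
  using dual unfolding dual_colex3_def by blast

lemma card_tets_containing_face: "f \<in> F \<Longrightarrow> card {\<nu>\<in>T. f \<in> tf \<nu>} = 2"
  using dual unfolding dual_colex3_def by blast

lemma vertex_in_some_tet: "v \<in> V \<Longrightarrow> \<exists>\<nu>\<in>T. v \<in> tv \<nu>"
  using dual unfolding dual_colex3_def by blast

lemma star_connected_through_faces:
  "\<lbrakk>v \<in> V; \<nu> \<in> T; \<mu> \<in> T; v \<in> tv \<nu>; v \<in> tv \<mu>\<rbrakk> \<Longrightarrow>
    (\<nu>, \<mu>) \<in> {(\<alpha>, \<beta>). \<alpha> \<in> T \<and> \<beta> \<in> T \<and> (\<exists>f \<in> tf \<alpha> \<inter> tf \<beta>. v \<in> fv f)}\<^sup>*"
  using dual unfolding dual_colex3_def by blast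

lemma face_vertices_subset: "\<nu> \<in> T \<Longrightarrow> f \<in> tf \<nu> \<Longrightarrow> fv f \<subseteq> tv \<nu>"
  using tet_faces unfolding bij_betw_def by blast

lemma tet_has_colour: "\<nu> \<in> T \<Longrightarrow> \<exists>v\<in>tv \<nu>. col v = c"
  using tet_vertices rainbow_set_has_colour by blast

lemma tet_colour_unique:
  "\<lbrakk>\<nu> \<in> T; v \<in> tv \<nu>; w \<in> tv \<nu>; col v = col w\<rbrakk> \<Longrightarrow> v = w"
  using tet_vertices by (metis inj_onD)

lemma is_cface_iff_opposite:
  assumes "\<nu> \<in> T" "v \<in> tv \<nu>" "col v = c" "f \<in> tf \<nu>"
  shows "is_cface col fv c f \<longleftrightarrow> v \<notin> fv f"
proof -
  have "w = v" if "w \<in> fv f" "col w = c" for w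
    using that assms face_vertices_subset tet_colour_unique by (metis subsetD)
  then show ?thesis using assms(3) unfolding is_cface_def by blast
qed

lemma eq_cface_of_iff_opposite:
  assumes "\<nu> \<in> T" "v \<in> tv \<nu>" "col v = c"
  shows "f = cface_of col tf fv c \<nu> \<longleftrightarrow> f \<in> tf \<nu> \<and> v \<notin> fv f"
proof -
  have "\<exists>!f\<in>tf \<nu>. v \<notin> fv f"
    using tet_faces tet_vertices assms by (intro opposite_face_unique) auto
  then obtain f where f: "f \<in> tf \<nu>" "v \<notin> fv f"
    and unique: "\<And>g. g \<in> tf \<nu> \<Longrightarrow> v \<notin> fv g \<Longrightarrow> g = f"
    by (elim ex1E) blast
  have "cface_of col tf fv c \<nu> = f"
    unfolding cface_of_def
  proof (rule the_equality)
    show "f \<in> tf \<nu> \<and> is_cface col fv c f"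
      using f is_cface_iff_opposite[OF assms] by blast
    show "g = f" if "g \<in> tf \<nu> \<and> is_cface col fv c g" for g
      using that unique is_cface_iff_opposite[OF assms] by blast
  qed
  then show ?thesis using f unique by blast
qed

lemma merge_rel_keeps_c_vertex:
  assumes "(\<alpha>, \<beta>) \<in> merge_rel col T tf fv c" "v \<in> tv \<alpha>" "col v = c"
  shows "v \<in> tv \<beta>"
proof -
  obtain f w where "\<alpha> \<in> T" "\<beta> \<in> T" "f \<in> tf \<alpha>" "f \<in> tf \<beta>" "w \<in> fv f" "col w = c"
    using assms(1) unfolding merge_rel_def is_cface_def by blast
  then show ?thesis
    using assms(2,3) face_vertices_subset tet_colour_unique by (metis subsetD)
qed

lemma merge_class_eq_tets_at:
  assumes "\<nu> \<in> T" "v \<in> tv \<nu>" "col v = c"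
  shows "{\<mu> \<in> T. (\<nu>, \<mu>) \<in> (merge_rel col T tf fv c)\<^sup>*} = tets_at T tv v"
proof -
  have "v \<in> tv \<mu>" if "(\<nu>, \<mu>) \<in> (merge_rel col T tf fv c)\<^sup>*" for \<mu>
    using that by induction (use assms merge_rel_keeps_c_vertex in blast)+
  moreover have "(\<nu>, \<mu>) \<in> (merge_rel col T tf fv c)\<^sup>*" if "\<mu> \<in> T" "v \<in> tv \<mu>" for \<mu>
  proof -
    have "v \<in> V" using tet_vertices assms(1,2) by blast
    then have "(\<nu>, \<mu>) \<in> {(\<alpha>, \<beta>). \<alpha> \<in> T \<and> \<beta> \<in> T \<and> (\<exists>f \<in> tf \<alpha> \<inter> tf \<beta>. v \<in> fv f)}\<^sup>*"
      using star_connected_through_faces assms(1,2) that by blast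
    moreover have "{(\<alpha>, \<beta>). \<alpha> \<in> T \<and> \<beta> \<in> T \<and> (\<exists>f \<in> tf \<alpha> \<inter> tf \<beta>. v \<in> fv f)}
        \<subseteq> merge_rel col T tf fv c"
      unfolding merge_rel_def is_cface_def using assms(3) by blast
    ultimately show ?thesis using rtrancl_mono by blast
  qed
  ultimately show ?thesis unfolding tets_at_def by blast
qed

lemma minor_cells_eq_stars: "minor_cells col T tf fv c = tets_at T tv ` {v \<in> V. col v = c}"
proof
  show "minor_cells col T tf fv c \<subseteq> tets_at T tv ` {v \<in> V. col v = c}"
  proof
    fix X assume "X \<in> minor_cells col T tf fv c"
    then obtain \<nu> where \<nu>: "\<nu> \<in> T" "X = {\<mu> \<in> T. (\<nu>, \<mu>) \<in> (merge_rel col T tf fv c)\<^sup>*}"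
      unfolding minor_cells_def by blast
    obtain v where v: "v \<in> tv \<nu>" "col v = c" using tet_has_colour \<nu>(1) by blast
    then have "v \<in> V" using tet_vertices \<nu>(1) by blast
    then show "X \<in> tets_at T tv ` {v \<in> V. col v = c}"
      using merge_class_eq_tets_at[OF \<nu>(1) v] \<nu>(2) v(2) by blast
  qed
  show "tets_at T tv ` {v \<in> V. col v = c} \<subseteq> minor_cells col T tf fv c"
  proof
    fix X assume "X \<in> tets_at T tv ` {v \<in> V. col v = c}"
    then obtain v where v: "v \<in> V" "col v = c" "X = tets_at T tv v" by blast
    obtain \<nu> where "\<nu> \<in> T" "v \<in> tv \<nu>" using vertex_in_some_tet v(1) by blast
    then show "X \<in> minor_cells col T tf fv c"
      using merge_class_eq_tets_at v unfolding minor_cells_def by blast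
  qed
qed

lemma inj_on_tets_at: "inj_on (tets_at T tv) {v \<in> V. col v = c}"
proof (rule inj_onI)
  fix v w
  assume v: "v \<in> {v \<in> V. col v = c}" and w: "w \<in> {v \<in> V. col v = c}"
    and eq: "tets_at T tv v = tets_at T tv w"
  obtain \<nu> where "\<nu> \<in> T" "v \<in> tv \<nu>" using vertex_in_some_tet v by blast
  moreover then have "w \<in> tv \<nu>" using eq unfolding tets_at_def by blast
  ultimately show "v = w" using v w tet_colour_unique by auto
qed

lemma even_card_star_containing_face:
  assumes "v \<in> fv f"
  shows "even (card {\<nu> \<in> tets_at T tv v. f \<in> tf \<nu>})"
proof (cases "\<exists>\<nu>\<in>tets_at T tv v. f \<in> tf \<nu>")
  case True
  then have "f \<in> F" using tet_faces unfolding tets_at_def by blast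
  moreover have "{\<nu> \<in> tets_at T tv v. f \<in> tf \<nu>} = {\<nu>\<in>T. f \<in> tf \<nu>}"
    using assms face_vertices_subset unfolding tets_at_def by blast
  ultimately show ?thesis using card_tets_containing_face by simp
next
  case False
  then have "{\<nu> \<in> tets_at T tv v. f \<in> tf \<nu>} = {}" by blast
  then show ?thesis by (metis card.empty even_zero)
qed

lemma boundary_star_eq_sum_cfaces:
  assumes "col v = c"
  shows "bd3 tf (tets_at T tv v) = sum2 (\<lambda>\<nu>. {cface_of col tf fv c \<nu>}) (tets_at T tv v)"
proof -
  have cface: "f = cface_of col tf fv c \<nu> \<longleftrightarrow> f \<in> tf \<nu> \<and> v \<notin> fv f"
    if "\<nu> \<in> tets_at T tv v" for f \<nu>
    using that eq_cface_of_iff_opposite assms unfolding tets_at_def by blast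
  have "odd (card {\<nu> \<in> tets_at T tv v. f \<in> tf \<nu>})
      \<longleftrightarrow> odd (card {\<nu> \<in> tets_at T tv v. f \<in> {cface_of col tf fv c \<nu>}})" for f
  proof (cases "v \<in> fv f")
    case True
    then have "{\<nu> \<in> tets_at T tv v. f \<in> {cface_of col tf fv c \<nu>}} = {}"
      using cface by blast
    then have "card {\<nu> \<in> tets_at T tv v. f \<in> {cface_of col tf fv c \<nu>}} = 0"
      by (simp only: card.empty)
    then show ?thesis using even_card_star_containing_face[OF True] by presburger
  next
    case False
    then have "{\<nu> \<in> tets_at T tv v. f \<in> tf \<nu>} = {\<nu> \<in> tets_at T tv v. f \<in> {cface_of col tf fv c \<nu>}}"
      using cface by blast
    then show ?thesis by simp
  qed
  then show ?thesis unfolding bd3_def sum2_def by blast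
qed

end

theorem lemma3:
  fixes V :: "'v set" and col :: "'v \<Rightarrow> color" and T :: "'t set"
    and tv :: "'t \<Rightarrow> 'v set" and tf :: "'t \<Rightarrow> 'f set" and F :: "'f set"
    and fv :: "'f \<Rightarrow> 'v set" and c :: color
  assumes "dual_colex3 V col T tv tf F fv"
  shows "bij_betw (tets_at T tv) {v \<in> V. col v = c} (minor_cells col T tf fv c)
    \<and> (\<forall>v \<in> V. col v = c \<longrightarrow>
         bd3 tf (tets_at T tv v) = sum2 (\<lambda>\<nu>. {cface_of col tf fv c \<nu>}) (tets_at T tv v))"
proof -
  interpret colex3_dual V col T tv tf F fv
    using assms by unfold_locales
  show ?thesis
    using inj_on_tets_at minor_cells_eq_stars boundary_star_eq_sum_cfaces
    unfolding bij_betw_def by blast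
qed

end
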